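(* Given an $n$-qubit state $\lvert\psi\rangle$, let $\lvert\phi\rangle$ be a stabilizer state that maximizes the stabilizer fidelity, and let $S^* = \mathrm{Weyl}(\lvert\phi\rangle)$. Let $T \subset S^*$ be a proper subspace of $S^*$. Then \[\sum_{x \in S^* \setminus T}q_\psi(x) \geq \frac{2-\sqrt{3}}{2} F_\mathcal{S}(\lvert\psi\rangle)^4.\]
   Context: For $x=(a,b)\in\mathbb F_2^{2n}$ the Weyl operator is $W_x = i^{a\cdot b}X^{a_1}Z^{b_1}\otimes\cdots\otimes X^{a_n}Z^{b_n}$; $p_\psi(x)=2^{-n}\langle\psi|W_x|\psi\rangle^2$ and $q_\psi(x)=\sum_{y\in\mathbb F_2^{2n}}p_\psi(y)p_\psi(x+y)$ (the distribution produced by Bell difference sampling); $\mathrm{Weyl}(\lvert\phi\rangle)=\{x: W_x\lvert\phi\rangle=\pm\lvert\phi\rangle\}$; $F_\mathcal{S}(\lvert\psi\rangle)=\max_{\lvert\phi\rangle\text{ stabilizer}}\lvert\langle\phi|\psi\rangle\rvert^2$. *)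

theory Defs
  imports Complex_Main
begin

text \<open>Computational basis labels of n qubits: bit strings of length n.
  An n-qubit vector is a function from bit strings to complex numbers; only its
  values on strings of length n matter.\<close>
definition bits :: "nat \<Rightarrow> bool list set" where
  "bits n = {xs. length xs = n}"

definition xorv :: "bool list \<Rightarrow> bool list \<Rightarrow> bool list" where
  "xorv a b = map2 (\<noteq>) a b"

definition dotc :: "bool list \<Rightarrow> bool list \<Rightarrow> nat" where
  "dotc a b = length (filter id (map2 (\<and>) a b))"

definition pts :: "nat \<Rightarrow> (bool list \<times> bool list) set" where
  "pts n = bits n \<times> bits n"

definition padd :: "bool list \<times> bool list \<Rightarrow> bool list \<times> bool list \<Rightarrow> bool list \<times> bool list" where
  "padd x y = (xorv (fst x) (fst y), xorv (snd x) (snd y))"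

text \<open>Weyl operator W_x = i^{a.b} X^a Z^b acting on a vector v:
  W_x |c> = i^{a.b} (-1)^{b.c} |c + a>, hence (W_x v)(d) = i^{a.b} (-1)^{b.(d+a)} v(d+a).\<close>
definition weyl_apply ::
  "bool list \<times> bool list \<Rightarrow> (bool list \<Rightarrow> complex) \<Rightarrow> bool list \<Rightarrow> complex" where
  "weyl_apply x v d =
     \<i> ^ dotc (fst x) (snd x) * (-1) ^ dotc (snd x) (xorv d (fst x)) * v (xorv d (fst x))"

definition inner_n :: "nat \<Rightarrow> (bool list \<Rightarrow> complex) \<Rightarrow> (bool list \<Rightarrow> complex) \<Rightarrow> complex" where
  "inner_n n u v = (\<Sum>d\<in>bits n. cnj (u d) * v d)"

definition unit_state :: "nat \<Rightarrow> (bool list \<Rightarrow> complex) \<Rightarrow> bool" where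
  "unit_state n v \<longleftrightarrow> inner_n n v v = 1"

text \<open>p_psi(x) = 2^{-n} <psi|W_x|psi>^2 (the expectation is real since W_x is Hermitian).\<close>
definition pdist :: "nat \<Rightarrow> (bool list \<Rightarrow> complex) \<Rightarrow> bool list \<times> bool list \<Rightarrow> real" where
  "pdist n psi x = (cmod (inner_n n psi (weyl_apply x psi)))\<^sup>2 / 2 ^ n"

definition qdist :: "nat \<Rightarrow> (bool list \<Rightarrow> complex) \<Rightarrow> bool list \<times> bool list \<Rightarrow> real" where
  "qdist n psi x = (\<Sum>y\<in>pts n. pdist n psi y * pdist n psi (padd x y))"

definition weyl_set :: "nat \<Rightarrow> (bool list \<Rightarrow> complex) \<Rightarrow> (bool list \<times> bool list) set" where
  "weyl_set n phi = {x \<in> pts n. (\<forall>d\<in>bits n. weyl_apply x phi d = phi d)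
                               \<or> (\<forall>d\<in>bits n. weyl_apply x phi d = - phi d)}"

text \<open>Stabilizer state: a unit vector stabilized (up to sign) by 2^n distinct Weyl operators,
  i.e. by a stabilizer group of 2^n Pauli operators.\<close>
definition stabilizer_state :: "nat \<Rightarrow> (bool list \<Rightarrow> complex) \<Rightarrow> bool" where
  "stabilizer_state n phi \<longleftrightarrow> unit_state n phi \<and>
     (\<exists>S. S \<subseteq> pts n \<and> card S = 2 ^ n \<and>
          (\<forall>x\<in>S. (\<forall>d\<in>bits n. weyl_apply x phi d = phi d)
                \<or> (\<forall>d\<in>bits n. weyl_apply x phi d = - phi d)))"

definition stab_fidelity :: "nat \<Rightarrow> (bool list \<Rightarrow> complex) \<Rightarrow> real" where
  "stab_fidelity n psi = Sup {(cmod (inner_n n phi psi))\<^sup>2 | phi. stabilizer_state n phi}"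

definition f2_subspace :: "nat \<Rightarrow> (bool list \<times> bool list) set \<Rightarrow> bool" where
  "f2_subspace n T \<longleftrightarrow> T \<subseteq> pts n \<and> (replicate n False, replicate n False) \<in> T \<and>
     (\<forall>x\<in>T. \<forall>y\<in>T. padd x y \<in> T)"

end

theory Submission
  imports Defs "HOL-Analysis.Convex"
begin

text \<open>Let \<open>S = Weyl(phi)\<close>, a subspace of size \<open>2^n\<close>. Since \<open>T\<close> is a proper subspace of \<open>S\<close>,
  counting symplectic complements gives \<open>w\<close> commuting with \<open>T\<close> but anticommuting with some
  \<open>x0 \<in> S\<close>; then \<open>H = S \<inter> w\<^sup>\<bottom>\<close> has index two in \<open>S\<close> and contains \<open>T\<close>.
  The state \<open>W_w phi\<close> is again a stabilizer state with Weyl set \<open>S\<close>, its signs flipped exactly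
  off \<open>H\<close>. The identity \<open>\<Sum>x\<in>S. <phi|W_x|phi> <psi|W_x|psi> = 2^n |<phi|psi>|^2\<close>, applied to
  \<open>phi\<close> and to \<open>W_w phi\<close>, together with Cauchy-Schwarz bounds the \<open>p_psi\<close>-mass of \<open>H\<close> and of
  \<open>S - H\<close> from below by \<open>(u + v)^2/2\<close> and \<open>(u - v)^2/2\<close>, where \<open>u = |<phi|psi>|^2\<close> and
  \<open>v = |<W_w phi|psi>|^2\<close>. Maximality of \<open>u\<close> against the stabilizer states
  \<open>(phi \<plusminus> W_w phi)/sqrt 2\<close> and \<open>(phi \<plusminus> W_(w+x0) phi)/sqrt 2\<close> bounds both parts of the cross
  term \<open><phi|psi>* <W_w phi|psi>\<close>, giving \<open>2uv \<le> (u - v)^2\<close> and so \<open>v \<le> (2 - sqrt 3) u\<close>.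
  Finally, \<open>H\<close> acts on \<open>S - H \<subseteq> S - T\<close> by translation, so the \<open>q_psi\<close>-mass of \<open>S - H\<close> is at
  least the product of the two masses.\<close>

section \<open>Bit strings and characters\<close>

lemma xorv_simps [simp]:
  "xorv [] b = []" "xorv a [] = []" "xorv (x # a) (y # b) = (x \<noteq> y) # xorv a b"
  by (auto simp: xorv_def)

lemma dotc_simps [simp]:
  "dotc [] b = 0" "dotc a [] = 0" "dotc (x # a) (y # b) = of_bool (x \<and> y) + dotc a b"
  by (auto simp: dotc_def)

lemma length_xorv [simp]: "length (xorv a b) = min (length a) (length b)"
  by (simp add: xorv_def)

lemma xorv_commute: "xorv a b = xorv b a"
  by (induction a b rule: list_induct2') auto

lemma xorv_assoc: "xorv (xorv a b) c = xorv a (xorv b c)"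
proof (induction a arbitrary: b c)
  case (Cons x a)
  then show ?case by (cases b; cases c) auto
qed simp

lemma xorv_self: "xorv a a = replicate (length a) False"
  by (induction a) auto

lemma xorv_replicate_False: "length a \<le> n \<Longrightarrow> xorv a (replicate n False) = a"
proof (induction a arbitrary: n)
  case (Cons x a)
  then show ?case by (cases n) auto
qed simp

lemma xorv_xorv_cancel: "length a \<le> length b \<Longrightarrow> xorv (xorv a b) b = a"
  by (simp add: xorv_assoc xorv_self xorv_replicate_False)

lemma xorv_xorv_cancel_left: "length b \<le> length a \<Longrightarrow> xorv a (xorv a b) = b"
  by (induction a b rule: list_induct2') auto

lemma xorv_eq_replicate_False_iff:
  "length a = length b \<Longrightarrow> xorv a b = replicate (length a) False \<longleftrightarrow> a = b"
  by (induction a b rule: list_induct2) auto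

lemma dotc_commute: "dotc a b = dotc b a"
  by (induction a b rule: list_induct2') auto

lemma dotc_replicate_False [simp]:
  "dotc (replicate n False) c = 0" "dotc c (replicate n False) = 0"
proof -
  show "dotc (replicate n False) c = 0" for c
  proof (induction n arbitrary: c)
    case (Suc n)
    then show ?case by (cases c) auto
  qed simp
  then show "dotc c (replicate n False) = 0"
    by (simp add: dotc_commute)
qed

lemma neg_one_power_dotc_xorv:
  "length c = length e \<Longrightarrow> (-1::complex) ^ dotc b (xorv c e) = (-1) ^ dotc b c * (-1) ^ dotc b e"
proof (induction c e arbitrary: b rule: list_induct2)
  case (Cons x c y e)
  then show ?case by (cases b) (auto simp: power_add)
qed simp

lemma neg_one_power_dotc_xorv_left:
  "length c = length e \<Longrightarrow> (-1::complex) ^ dotc (xorv c e) b = (-1) ^ dotc c b * (-1) ^ dotc e b"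
  using neg_one_power_dotc_xorv[of c e b] by (simp add: dotc_commute)

lemma bits_0: "bits 0 = {[]}"
  by (auto simp: bits_def)

lemma bits_Suc: "bits (Suc n) = Cons True ` bits n \<union> Cons False ` bits n"
  by (auto simp: bits_def length_Suc_conv)

lemma finite_bits [simp]: "finite (bits n)"
  by (induction n) (simp_all add: bits_0 bits_Suc)

lemma xorv_in_bits: "d \<in> bits n \<Longrightarrow> a \<in> bits n \<Longrightarrow> xorv d a \<in> bits n"
  by (simp add: bits_def)

lemma sum_bits_xorv_shift: "a \<in> bits n \<Longrightarrow> (\<Sum>d\<in>bits n. f (xorv d a)) = (\<Sum>d\<in>bits n. f d)"
  by (rule sum.reindex_bij_witness[where i="\<lambda>d. xorv d a" and j="\<lambda>d. xorv d a"])
     (auto simp: bits_def xorv_xorv_cancel)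

lemma sum_bits_neg_one_power_dotc:
  "length c = n \<Longrightarrow>
   (\<Sum>b\<in>bits n. (-1::complex) ^ dotc b c) = (if c = replicate n False then 2 ^ n else 0)"
proof (induction n arbitrary: c)
  case (Suc n)
  then obtain y c' where c: "c = y # c'" "length c' = n"
    by (auto simp: length_Suc_conv)
  have "(\<Sum>b\<in>bits (Suc n). (-1::complex) ^ dotc b c)
      = (\<Sum>b\<in>bits n. (-1) ^ (of_bool y + dotc b c')) + (\<Sum>b\<in>bits n. (-1) ^ dotc b c')"
    unfolding bits_Suc by (subst sum.union_disjoint) (auto simp: sum.reindex c)
  also have "\<dots> = (if y then 0 else 2 * (\<Sum>b\<in>bits n. (-1) ^ dotc b c'))"
    by (simp add: power_add flip: sum_distrib_left)
  finally show ?case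
    unfolding Suc.IH[OF c(2)] using c by auto
qed (simp add: bits_0)

section \<open>The symplectic space \<open>F_2^{2n}\<close>\<close>

definition pzero :: "nat \<Rightarrow> bool list \<times> bool list" where
  "pzero n = (replicate n False, replicate n False)"

lemma pts_iff: "x \<in> pts n \<longleftrightarrow> fst x \<in> bits n \<and> snd x \<in> bits n"
  by (cases x) (auto simp: pts_def)

lemma finite_pts [simp]: "finite (pts n)"
  by (simp add: pts_def)

lemma pzero_in_pts: "pzero n \<in> pts n"
  by (simp add: pzero_def pts_def bits_def)

lemma padd_in_pts: "x \<in> pts n \<Longrightarrow> y \<in> pts n \<Longrightarrow> padd x y \<in> pts n"
  by (auto simp: pts_def padd_def bits_def)

lemma padd_commute: "padd x y = padd y x"
  by (simp add: padd_def xorv_commute)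

lemma padd_assoc: "padd (padd x y) z = padd x (padd y z)"
  by (simp add: padd_def xorv_assoc)

lemma padd_self: "x \<in> pts n \<Longrightarrow> padd x x = pzero n"
  by (auto simp: pts_def padd_def bits_def pzero_def xorv_self)

lemma padd_pzero: "x \<in> pts n \<Longrightarrow> padd x (pzero n) = x"
  by (cases x) (auto simp: pts_def padd_def bits_def pzero_def xorv_replicate_False)

lemma padd_padd_cancel: "x \<in> pts n \<Longrightarrow> y \<in> pts n \<Longrightarrow> padd (padd x y) y = x"
  by (simp add: padd_assoc padd_self padd_pzero)

text \<open>Only the parity of \<open>symp_form x y\<close> matters: it is the symplectic form of \<open>F_2^{2n}\<close>,
  and \<open>W_x W_y = (-1)^(symp_form x y) W_y W_x\<close>.\<close>
definition symp_form :: "bool list \<times> bool list \<Rightarrow> bool list \<times> bool list \<Rightarrow> nat" where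
  "symp_form x y = dotc (snd x) (fst y) + dotc (snd y) (fst x)"

lemma symp_form_commute: "symp_form x y = symp_form y x"
  by (simp add: symp_form_def)

lemma symp_form_pzero [simp]: "symp_form (pzero n) y = 0"
  by (simp add: symp_form_def pzero_def)

lemma neg_one_power_symp_form_padd:
  assumes "x \<in> pts n" "y \<in> pts n" "z \<in> pts n"
  shows "(-1::complex) ^ symp_form (padd x y) z = (-1) ^ symp_form x z * (-1) ^ symp_form y z"
  using assms
  by (auto simp: symp_form_def padd_def pts_def bits_def power_add
      neg_one_power_dotc_xorv neg_one_power_dotc_xorv_left)

lemma even_symp_form_padd:
  assumes "x \<in> pts n" "y \<in> pts n" "z \<in> pts n"
  shows "even (symp_form (padd x y) z) \<longleftrightarrow> (even (symp_form x z) \<longleftrightarrow> even (symp_form y z))"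
  using neg_one_power_symp_form_padd[OF assms] by (auto simp: minus_one_power_iff split: if_splits)

lemma sum_pts_neg_one_power_symp_form:
  assumes "t \<in> pts n"
  shows "(\<Sum>w\<in>pts n. (-1::complex) ^ symp_form w t) = (if t = pzero n then 2 ^ n * 2 ^ n else 0)"
proof -
  obtain a b where t: "t = (a, b)" "length a = n" "length b = n"
    using assms by (cases t) (auto simp: pts_def bits_def)
  have "(\<Sum>w\<in>pts n. (-1::complex) ^ symp_form w t)
      = (\<Sum>c\<in>bits n. (-1::complex) ^ dotc c b) * (\<Sum>d\<in>bits n. (-1) ^ dotc d a)"
    unfolding pts_def sum.cartesian_product sum_product
    by (intro sum.cong refl) (auto simp: symp_form_def t power_add dotc_commute[of b])
  then show ?thesis
    using t by (simp add: sum_bits_neg_one_power_dotc pzero_def)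
qed

section \<open>Weyl operators\<close>

text \<open>\<open>W_x W_y = weyl_phase x y \<cdot> W_(x+y)\<close>.\<close>
definition weyl_phase :: "bool list \<times> bool list \<Rightarrow> bool list \<times> bool list \<Rightarrow> complex" where
  "weyl_phase x y = \<i> ^ dotc (fst x) (snd x) * \<i> ^ dotc (fst y) (snd y) * (-1) ^ dotc (snd x) (fst y)
     * (- \<i>) ^ dotc (xorv (fst x) (fst y)) (xorv (snd x) (snd y))"

lemma power_square_neg_one:
  "(\<i> ^ k)\<^sup>2 = (-1) ^ k" "((- \<i>) ^ k)\<^sup>2 = (-1) ^ k" "((-1::complex) ^ k)\<^sup>2 = 1"
  by (simp_all flip: power_mult add: power_mult mult.commute[of k])

lemma weyl_apply_weyl_apply:
  assumes x: "x \<in> pts n" and y: "y \<in> pts n" and d: "d \<in> bits n"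
  shows "weyl_apply x (weyl_apply y v) d = weyl_phase x y * weyl_apply (padd x y) v d"
proof -
  obtain a b a' b' where xy: "x = (a, b)" "y = (a', b')"
    by (cases x, cases y)
  have L: "length a = n" "length b = n" "length a' = n" "length b' = n" "length d = n"
    using x y d by (auto simp: xy pts_def bits_def)
  define D where "D = xorv d (xorv a a')"
  have D1: "xorv (xorv d a) a' = D"
    by (simp add: D_def xorv_assoc)
  have D2: "xorv D a' = xorv d a"
    using L by (simp add: D_def flip: xorv_assoc) (simp add: xorv_xorv_cancel)
  have c1: "(-1::complex) ^ dotc b (xorv d a) = (-1) ^ dotc b D * (-1) ^ dotc b a'"
    using neg_one_power_dotc_xorv[of D a' b] L D2 by (simp add: D_def)
  have c2: "(-1::complex) ^ dotc (xorv b b') D = (-1) ^ dotc b D * (-1) ^ dotc b' D"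
    using neg_one_power_dotc_xorv_left[of b b' D] L by (simp add: D_def)
  have "(- \<i>) ^ k * \<i> ^ k = 1" for k
    by (simp flip: power_mult_distrib)
  then show ?thesis
    unfolding weyl_apply_def padd_def xy weyl_phase_def
    using L by (simp add: D1 c1 c2 flip: D_def)
qed

lemma weyl_phase_square:
  assumes x: "x \<in> pts n" and y: "y \<in> pts n"
  shows "(weyl_phase x y)\<^sup>2 = (-1) ^ symp_form x y"
proof -
  obtain a b a' b' where xy: "x = (a, b)" "y = (a', b')"
    by (cases x, cases y)
  have L: "length a = n" "length b = n" "length a' = n" "length b' = n"
    using x y by (auto simp: xy pts_def bits_def)
  have "(weyl_phase x y)\<^sup>2
      = (-1) ^ dotc a b * (-1) ^ dotc a' b' * ((-1::complex) ^ dotc (xorv a a') (xorv b b'))"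
    unfolding weyl_phase_def xy by (simp add: power_mult_distrib power_square_neg_one)
  also have "\<dots> = ((-1) ^ dotc a b)\<^sup>2 * ((-1) ^ dotc a' b')\<^sup>2 * ((-1) ^ dotc a b' * (-1) ^ dotc a' b)"
    using L by (simp add: neg_one_power_dotc_xorv neg_one_power_dotc_xorv_left power2_eq_square
        algebra_simps)
  also have "\<dots> = (-1) ^ symp_form x y"
    by (simp add: power_square_neg_one symp_form_def xy dotc_commute[of b' a] dotc_commute[of b a']
        power_add)
  finally show ?thesis .
qed

lemma weyl_phase_commute: "weyl_phase x y = (-1) ^ symp_form x y * weyl_phase y x"
proof -
  have "(-1::complex) ^ dotc b a' = (-1) ^ (dotc b a' + dotc b' a) * (-1) ^ dotc b' a" for a b a' b'
    by (simp add: power_add mult.assoc power_square_neg_one flip: power2_eq_square)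
  then show ?thesis
    by (simp add: weyl_phase_def symp_form_def xorv_commute[of "fst x"] xorv_commute[of "snd x"]
        algebra_simps)
qed

lemma weyl_phase_self:
  assumes "x \<in> pts n"
  shows "weyl_phase x x = 1"
proof -
  obtain a b where x: "x = (a, b)" "length a = length b"
    using assms by (cases x) (auto simp: pts_def bits_def)
  have "weyl_phase x x = (\<i> ^ dotc a b)\<^sup>2 * (-1) ^ dotc a b"
    using x by (simp add: weyl_phase_def xorv_self dotc_commute[of b a] power2_eq_square)
  then show ?thesis
    by (simp add: power_square_neg_one(1) power_square_neg_one(3)[unfolded power2_eq_square])
qed

lemma weyl_apply_commute:
  assumes "x \<in> pts n" "y \<in> pts n" "d \<in> bits n"
  shows "weyl_apply x (weyl_apply y v) d = (-1) ^ symp_form x y * weyl_apply y (weyl_apply x v) d"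
  using assms by (simp add: weyl_apply_weyl_apply weyl_phase_commute[of x y] padd_commute)

lemma weyl_apply_pzero: "d \<in> bits n \<Longrightarrow> weyl_apply (pzero n) v d = v d"
  by (simp add: weyl_apply_def pzero_def bits_def xorv_replicate_False)

lemma weyl_apply_involution: "x \<in> pts n \<Longrightarrow> d \<in> bits n \<Longrightarrow> weyl_apply x (weyl_apply x v) d = v d"
  by (simp add: weyl_apply_weyl_apply weyl_phase_self padd_self weyl_apply_pzero)

lemma weyl_apply_cong:
  "x \<in> pts n \<Longrightarrow> d \<in> bits n \<Longrightarrow> (\<And>e. e \<in> bits n \<Longrightarrow> f e = g e) \<Longrightarrow>
   weyl_apply x f d = weyl_apply x g d"
  by (simp add: weyl_apply_def pts_iff xorv_in_bits)

lemma weyl_apply_linear: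
  "weyl_apply x (\<lambda>d. \<alpha> * f d + \<beta> * g d) d = \<alpha> * weyl_apply x f d + \<beta> * weyl_apply x g d"
  by (simp add: weyl_apply_def algebra_simps)

lemma weyl_apply_scale: "weyl_apply x (\<lambda>d. \<alpha> * f d) d = \<alpha> * weyl_apply x f d"
  by (simp add: weyl_apply_def algebra_simps)

lemma inner_n_cong:
  "(\<And>e. e \<in> bits n \<Longrightarrow> f e = f' e) \<Longrightarrow> (\<And>e. e \<in> bits n \<Longrightarrow> g e = g' e) \<Longrightarrow>
   inner_n n f g = inner_n n f' g'"
  by (simp add: inner_n_def)

lemma cnj_inner_n: "cnj (inner_n n f g) = inner_n n g f"
  by (simp add: inner_n_def mult.commute)

lemma inner_n_linear_right:
  "inner_n n f (\<lambda>d. \<alpha> * g d + \<beta> * h d) = \<alpha> * inner_n n f g + \<beta> * inner_n n f h"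
  by (simp add: inner_n_def algebra_simps sum.distrib sum_distrib_left)

lemma inner_n_linear_left:
  "inner_n n (\<lambda>d. \<alpha> * g d + \<beta> * h d) f = cnj \<alpha> * inner_n n g f + cnj \<beta> * inner_n n h f"
  by (simp add: inner_n_def algebra_simps sum.distrib sum_distrib_left)

lemma inner_n_scale_right: "inner_n n f (\<lambda>d. \<alpha> * g d) = \<alpha> * inner_n n f g"
  by (simp add: inner_n_def algebra_simps sum_distrib_left)

lemma inner_n_scale_left: "inner_n n (\<lambda>d. \<alpha> * g d) f = cnj \<alpha> * inner_n n g f"
  by (simp add: inner_n_def algebra_simps sum_distrib_left)

lemma inner_n_weyl_apply_self_adjoint:
  assumes x: "x \<in> pts n"
  shows "inner_n n f (weyl_apply x g) = inner_n n (weyl_apply x f) g"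
proof -
  obtain a b where xab: "x = (a, b)" and a: "a \<in> bits n" and b: "b \<in> bits n"
    using x by (cases x) (auto simp: pts_def)
  have sign: "(-1::complex) ^ dotc b (xorv d a) = (-1) ^ dotc b d * (-1) ^ dotc a b"
    if "d \<in> bits n" for d
    using that a b by (simp add: neg_one_power_dotc_xorv bits_def dotc_commute[of b a])
  have phase: "(- \<i>) ^ k * (-1) ^ k = \<i> ^ k" for k
    by (simp flip: power_mult_distrib)
  have "inner_n n f (weyl_apply x g)
      = (\<Sum>d\<in>bits n. cnj (f (xorv (xorv d a) a)) * (\<i> ^ dotc a b * (-1) ^ dotc b (xorv d a) * g (xorv d a)))"
    unfolding inner_n_def weyl_apply_def xab
    using a by (intro sum.cong) (auto simp: xorv_xorv_cancel bits_def)
  also have "\<dots> = (\<Sum>d\<in>bits n. cnj (f (xorv d a)) * (\<i> ^ dotc a b * (-1) ^ dotc b d * g d))"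
    by (rule sum_bits_xorv_shift[OF a])
  also have "\<dots> = (\<Sum>d\<in>bits n. cnj (\<i> ^ dotc a b * (-1) ^ dotc b (xorv d a) * f (xorv d a)) * g d)"
    by (intro sum.cong refl) (simp add: sign phase algebra_simps)
  also have "\<dots> = inner_n n (weyl_apply x f) g"
    by (simp add: inner_n_def weyl_apply_def xab)
  finally show ?thesis .
qed

lemma inner_n_weyl_apply_weyl_apply:
  assumes x: "x \<in> pts n"
  shows "inner_n n (weyl_apply x f) (weyl_apply x g) = inner_n n f g"
proof -
  have "inner_n n (weyl_apply x f) (weyl_apply x g) = inner_n n f (weyl_apply x (weyl_apply x g))"
    by (simp add: inner_n_weyl_apply_self_adjoint[OF x])
  also have "\<dots> = inner_n n f g"
    by (rule inner_n_cong) (auto simp: weyl_apply_involution[OF x])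
  finally show ?thesis .
qed

section \<open>Pauli expectations\<close>

text \<open>In this notation \<open>p_v(x) = |expect n v x|^2 / 2^n\<close>.\<close>
definition expect :: "nat \<Rightarrow> (bool list \<Rightarrow> complex) \<Rightarrow> bool list \<times> bool list \<Rightarrow> complex" where
  "expect n v x = inner_n n v (weyl_apply x v)"

lemma expect_real: "x \<in> pts n \<Longrightarrow> cnj (expect n v x) = expect n v x"
  by (simp add: expect_def cnj_inner_n inner_n_weyl_apply_self_adjoint)

lemma expect_mult_self:
  "x \<in> pts n \<Longrightarrow> expect n v x * expect n v x = complex_of_real ((cmod (expect n v x))\<^sup>2)"
  using complex_norm_square[of "expect n v x"] by (simp add: expect_real)

lemma expect_weyl_apply:
  assumes x: "x \<in> pts n" and w: "w \<in> pts n"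
  shows "expect n (weyl_apply w v) x = (-1) ^ symp_form x w * expect n v x"
proof -
  have "expect n (weyl_apply w v) x
      = inner_n n (weyl_apply w v) (\<lambda>d. (-1) ^ symp_form x w * weyl_apply w (weyl_apply x v) d)"
    unfolding expect_def by (rule inner_n_cong) (simp_all add: weyl_apply_commute[OF x w])
  then show ?thesis
    by (simp add: inner_n_scale_right inner_n_weyl_apply_weyl_apply[OF w] expect_def)
qed

lemma weyl_coefficient_product:
  assumes "a \<in> bits n" "b \<in> bits n" "d \<in> bits n" "e \<in> bits n"
  shows "(\<i> ^ dotc a b * (-1) ^ dotc b (xorv d a)) * (\<i> ^ dotc a b * (-1) ^ dotc b (xorv e a))
     = (-1::complex) ^ dotc b (xorv (xorv d e) a)"
proof -
  have L: "length a = n" "length b = n" "length d = n" "length e = n"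
    using assms by (auto simp: bits_def)
  have "(\<i> ^ dotc a b * (-1) ^ dotc b (xorv d a)) * (\<i> ^ dotc a b * (-1) ^ dotc b (xorv e a))
      = (\<i> ^ dotc a b)\<^sup>2 * ((-1::complex) ^ dotc b a)\<^sup>2 * ((-1) ^ dotc b d * (-1) ^ dotc b e)"
    using L by (simp add: neg_one_power_dotc_xorv power2_eq_square algebra_simps)
  also have "\<dots> = (-1::complex) ^ dotc b (xorv (xorv d e) a)"
    using L by (simp add: power_square_neg_one neg_one_power_dotc_xorv dotc_commute[of a b])
  finally show ?thesis .
qed

lemma sum_pts_inner_n_weyl_product_expand:
  "(\<Sum>x\<in>pts n. inner_n n f (weyl_apply x g) * inner_n n h (weyl_apply x k))
     = (\<Sum>a\<in>bits n. \<Sum>d\<in>bits n. \<Sum>e\<in>bits n. cnj (f d) * g (xorv d a) * (cnj (h e) * k (xorv e a))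
          * (\<Sum>b\<in>bits n. (-1) ^ dotc b (xorv (xorv d e) a)))"
proof -
  define B where "B = bits n"
  define G where "G a d e = cnj (f d) * g (xorv d a) * (cnj (h e) * k (xorv e a))" for a d e
  have "(\<Sum>x\<in>pts n. inner_n n f (weyl_apply x g) * inner_n n h (weyl_apply x k))
      = (\<Sum>a\<in>B. \<Sum>b\<in>B. \<Sum>d\<in>B. \<Sum>e\<in>B. G a d e * (-1) ^ dotc b (xorv (xorv d e) a))"
    unfolding pts_def sum.cartesian_product' inner_n_def sum_product B_def
  proof (intro sum.cong refl)
    fix a b d e assume "a \<in> bits n" "b \<in> bits n" "d \<in> bits n" "e \<in> bits n"
    note phase = weyl_coefficient_product[OF this, symmetric]
    show "cnj (f d) * weyl_apply (a, b) g d * (cnj (h e) * weyl_apply (a, b) k e)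
        = G a d e * (-1) ^ dotc b (xorv (xorv d e) a)"
      unfolding weyl_apply_def G_def phase
      by (simp add: algebra_simps)
  qed
  also have "\<dots> = (\<Sum>a\<in>B. \<Sum>d\<in>B. \<Sum>e\<in>B. G a d e * (\<Sum>b\<in>B. (-1) ^ dotc b (xorv (xorv d e) a)))"
    unfolding sum_distrib_left
    by (rule sum.cong[OF refl], rule trans[OF sum.swap], rule sum.cong[OF refl], rule sum.swap)
  finally show ?thesis
    by (simp only: B_def G_def)
qed

text \<open>In the expansion, the character sum over the \<open>Z\<close>-part \<open>b\<close> of \<open>x = (a, b)\<close> forces
  \<open>a = d + e\<close>, which swaps the pairing of the four vectors.\<close>
lemma sum_pts_inner_n_weyl_product:
  "(\<Sum>x\<in>pts n. inner_n n f (weyl_apply x g) * inner_n n h (weyl_apply x k))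
     = 2 ^ n * inner_n n f k * inner_n n h g"
proof -
  define B where "B = bits n"
  define G where "G a d e = cnj (f d) * g (xorv d a) * (cnj (h e) * k (xorv e a))" for a d e
  have "(\<Sum>x\<in>pts n. inner_n n f (weyl_apply x g) * inner_n n h (weyl_apply x k))
      = (\<Sum>a\<in>B. \<Sum>d\<in>B. \<Sum>e\<in>B. if a = xorv d e then 2 ^ n * G a d e else 0)"
    unfolding sum_pts_inner_n_weyl_product_expand G_def[symmetric] B_def[symmetric]
  proof (intro sum.cong refl)
    fix a d e assume "a \<in> B" "d \<in> B" "e \<in> B"
    then have "length a = n" "length (xorv d e) = n"
      by (auto simp: B_def bits_def)
    then show "G a d e * (\<Sum>b\<in>B. (-1) ^ dotc b (xorv (xorv d e) a))
        = (if a = xorv d e then 2 ^ n * G a d e else 0)"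
      using xorv_eq_replicate_False_iff[of "xorv d e" a]
      by (simp add: B_def sum_bits_neg_one_power_dotc eq_commute[of a])
  qed
  also have "\<dots> = (\<Sum>d\<in>B. \<Sum>e\<in>B. \<Sum>a\<in>B. if a = xorv d e then 2 ^ n * G a d e else 0)"
    by (rule trans[OF sum.swap], rule sum.cong[OF refl], rule sum.swap)
  also have "\<dots> = (\<Sum>d\<in>B. \<Sum>e\<in>B. 2 ^ n * (cnj (f d) * k d) * (cnj (h e) * g e))"
  proof (intro sum.cong refl)
    fix d e assume "d \<in> B" "e \<in> B"
    then have "length d = length e" "xorv d e \<in> B"
      by (auto simp: B_def bits_def)
    moreover have "xorv d (xorv d e) = e" "xorv e (xorv d e) = d" if "length d = length e"
      using that xorv_xorv_cancel_left[of d e] xorv_xorv_cancel_left[of e d]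
      by (simp_all add: xorv_commute[of e d])
    ultimately show "(\<Sum>a\<in>B. if a = xorv d e then 2 ^ n * G a d e else 0)
        = 2 ^ n * (cnj (f d) * k d) * (cnj (h e) * g e)"
      by (simp add: sum.delta B_def G_def algebra_simps)
  qed
  also have "\<dots> = 2 ^ n * inner_n n f k * inner_n n h g"
    unfolding inner_n_def B_def sum_product by (simp add: sum_distrib_left algebra_simps)
  finally show ?thesis .
qed

lemma sum_pts_cmod_expect_square:
  assumes "unit_state n v"
  shows "(\<Sum>x\<in>pts n. (cmod (expect n v x))\<^sup>2) = 2 ^ n"
proof -
  have "complex_of_real (\<Sum>x\<in>pts n. (cmod (expect n v x))\<^sup>2) = (\<Sum>x\<in>pts n. expect n v x * expect n v x)"
    unfolding of_real_sum by (intro sum.cong refl) (simp add: expect_mult_self)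
  also have "\<dots> = 2 ^ n"
    using sum_pts_inner_n_weyl_product[of n v v v v] assms
    unfolding expect_def unit_state_def by simp
  finally have "complex_of_real (\<Sum>x\<in>pts n. (cmod (expect n v x))\<^sup>2) = complex_of_real (2 ^ n)"
    by simp
  then show ?thesis
    by (simp only: of_real_eq_iff)
qed

lemma sum_pts_expect_mult:
  "(\<Sum>x\<in>pts n. expect n phi x * expect n psi x)
     = 2 ^ n * complex_of_real ((cmod (inner_n n phi psi))\<^sup>2)"
  using sum_pts_inner_n_weyl_product[of n phi phi psi psi]
  by (simp add: expect_def mult.assoc flip: cnj_inner_n[of n phi psi] complex_norm_square)

section \<open>Stabilizer states\<close>

definition weyl_eigen :: "nat \<Rightarrow> (bool list \<Rightarrow> complex) \<Rightarrow> bool list \<times> bool list \<Rightarrow> complex \<Rightarrow> bool" where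
  "weyl_eigen n v x l \<longleftrightarrow> (\<forall>d\<in>bits n. weyl_apply x v d = l * v d)"

lemma weyl_set_iff: "x \<in> weyl_set n v \<longleftrightarrow> x \<in> pts n \<and> (weyl_eigen n v x 1 \<or> weyl_eigen n v x (-1))"
  by (simp add: weyl_set_def weyl_eigen_def)

lemma weyl_set_subset_pts: "weyl_set n v \<subseteq> pts n"
  by (auto simp: weyl_set_def)

lemma finite_weyl_set [simp]: "finite (weyl_set n v)"
  using finite_subset[OF weyl_set_subset_pts finite_pts] .

lemma unit_state_nonzero: "unit_state n v \<Longrightarrow> \<exists>d\<in>bits n. v d \<noteq> 0"
  by (rule ccontr) (auto simp: unit_state_def inner_n_def)

lemma expect_weyl_eigen:
  assumes "weyl_eigen n v x l" "unit_state n v"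
  shows "expect n v x = l"
proof -
  have "expect n v x = inner_n n v (\<lambda>d. l * v d)"
    unfolding expect_def using assms(1) by (intro inner_n_cong) (auto simp: weyl_eigen_def)
  then show ?thesis
    using assms(2) by (simp add: inner_n_scale_right unit_state_def)
qed

lemma cmod_expect_weyl_set:
  assumes "unit_state n v" "x \<in> weyl_set n v"
  shows "cmod (expect n v x) = 1"
  using assms(2) expect_weyl_eigen[OF _ assms(1), of x] by (auto simp: weyl_set_iff)

lemma weyl_eigen_weyl_apply:
  assumes "x \<in> pts n" "d \<in> bits n" "weyl_eigen n v x l" "weyl_eigen n v y m"
  shows "weyl_apply x (weyl_apply y v) d = l * m * v d"
proof -
  have "weyl_apply x (weyl_apply y v) d = weyl_apply x (\<lambda>e. m * v e) d"
    using assms by (intro weyl_apply_cong) (auto simp: weyl_eigen_def)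
  then show ?thesis
    using assms by (simp add: weyl_apply_scale weyl_eigen_def)
qed

lemma weyl_eigen_conj:
  assumes "x \<in> pts n" "w \<in> pts n" "weyl_eigen n v x l"
  shows "weyl_eigen n (weyl_apply w v) x ((-1) ^ symp_form x w * l)"
  unfolding weyl_eigen_def
proof
  fix d assume d: "d \<in> bits n"
  have "weyl_apply w (weyl_apply x v) d = weyl_apply w (\<lambda>e. l * v e) d"
    using assms d by (intro weyl_apply_cong) (auto simp: weyl_eigen_def)
  then show "weyl_apply x (weyl_apply w v) d = (-1) ^ symp_form x w * l * weyl_apply w v d"
    using weyl_apply_commute[OF assms(1,2) d] by (simp add: weyl_apply_scale)
qed

lemma even_symp_form_weyl_eigen:
  assumes "x \<in> pts n" "y \<in> pts n" "weyl_eigen n v x l" "weyl_eigen n v y m"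
    and "d \<in> bits n" "v d \<noteq> 0" "l \<noteq> 0" "m \<noteq> 0"
  shows "even (symp_form x y)"
proof (rule ccontr)
  assume "odd (symp_form x y)"
  then have "weyl_apply x (weyl_apply y v) d = - weyl_apply y (weyl_apply x v) d"
    using weyl_apply_commute[of x n y d v] assms by simp
  then have "l * m * v d = - (m * l * v d)"
    using assms weyl_eigen_weyl_apply[of x n d v l y m] weyl_eigen_weyl_apply[of y n d v m x l]
    by simp
  then show False
    using assms by simp
qed

lemma weyl_eigen_padd:
  assumes "x \<in> pts n" "y \<in> pts n" "weyl_eigen n v x l" "weyl_eigen n v y m"
  shows "weyl_eigen n v (padd x y) (l * m / weyl_phase x y)"
  unfolding weyl_eigen_def
proof
  fix d assume d: "d \<in> bits n"
  have "weyl_phase x y \<noteq> 0"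
    using weyl_phase_square[OF assms(1,2)] by auto
  then show "weyl_apply (padd x y) v d = l * m / weyl_phase x y * v d"
    using weyl_apply_weyl_apply[OF assms(1,2) d, of v] weyl_eigen_weyl_apply[OF assms(1) d assms(3,4)]
    by (simp add: field_simps)
qed

lemma
  assumes "unit_state n v" "x \<in> weyl_set n v" "y \<in> weyl_set n v"
  shows even_symp_form_weyl_set: "even (symp_form x y)"
    and padd_in_weyl_set: "padd x y \<in> weyl_set n v"
proof -
  obtain d where d: "d \<in> bits n" "v d \<noteq> 0"
    using unit_state_nonzero[OF assms(1)] by blast
  obtain l m where x: "x \<in> pts n" "weyl_eigen n v x l" "l = 1 \<or> l = -1"
    and y: "y \<in> pts n" "weyl_eigen n v y m" "m = 1 \<or> m = -1"
    using assms(2,3) by (auto simp: weyl_set_iff)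
  show even: "even (symp_form x y)"
    using even_symp_form_weyl_eigen[OF x(1) y(1) x(2) y(2) d] x(3) y(3) by auto
  then have "weyl_phase x y = 1 \<or> weyl_phase x y = -1"
    using weyl_phase_square[OF x(1) y(1)] power2_eq_1_iff by auto
  then show "padd x y \<in> weyl_set n v"
    using weyl_eigen_padd[OF x(1) y(1) x(2) y(2)] x(3) y(3) padd_in_pts[OF x(1) y(1)]
    by (auto simp: weyl_set_iff)
qed

lemma f2_subspace_weyl_set:
  assumes "unit_state n v"
  shows "f2_subspace n (weyl_set n v)"
proof -
  have "pzero n \<in> weyl_set n v"
    by (simp add: weyl_set_iff weyl_eigen_def weyl_apply_pzero pzero_in_pts)
  then show ?thesis
    using padd_in_weyl_set[OF assms] weyl_set_subset_pts by (auto simp: f2_subspace_def pzero_def)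
qed

lemma card_weyl_set_parseval:
  assumes "unit_state n v"
  shows "real (card (weyl_set n v)) + (\<Sum>x\<in>pts n - weyl_set n v. (cmod (expect n v x))\<^sup>2) = 2 ^ n"
proof -
  have "(cmod (expect n v x))\<^sup>2 = 1" if "x \<in> weyl_set n v" for x
    using cmod_expect_weyl_set[OF assms that] by simp
  then have "(\<Sum>x\<in>weyl_set n v. (cmod (expect n v x))\<^sup>2) = real (card (weyl_set n v))"
    by simp
  then show ?thesis
    using sum.subset_diff[OF weyl_set_subset_pts[of n v] finite_pts, of "\<lambda>x. (cmod (expect n v x))\<^sup>2"]
      sum_pts_cmod_expect_square[OF assms]
    by simp
qed

lemma card_weyl_set_le:
  assumes "unit_state n v"
  shows "card (weyl_set n v) \<le> 2 ^ n"
proof -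
  have "real (card (weyl_set n v)) \<le> 2 ^ n"
    using card_weyl_set_parseval[OF assms]
      sum_nonneg[of "pts n - weyl_set n v" "\<lambda>x. (cmod (expect n v x))\<^sup>2", OF zero_le_power2]
    by linarith
  then show ?thesis
    by (simp only: of_nat_le_iff[symmetric, where 'a = real] of_nat_power of_nat_numeral)
qed

lemma stabilizer_state_iff:
  "stabilizer_state n v \<longleftrightarrow> unit_state n v \<and> card (weyl_set n v) = 2 ^ n"
proof
  assume st: "stabilizer_state n v"
  then obtain S where "S \<subseteq> weyl_set n v" "card S = 2 ^ n" and u: "unit_state n v"
    by (auto simp: stabilizer_state_def weyl_set_def)
  then have "2 ^ n \<le> card (weyl_set n v)"
    using card_mono[OF finite_weyl_set] by metis
  then show "unit_state n v \<and> card (weyl_set n v) = 2 ^ n"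
    using card_weyl_set_le[OF u] u by simp
next
  assume "unit_state n v \<and> card (weyl_set n v) = 2 ^ n"
  then show "stabilizer_state n v"
    unfolding stabilizer_state_def
    by (intro conjI exI[of _ "weyl_set n v"]) (auto simp: weyl_set_def)
qed

lemma expect_eq_0_stabilizer:
  assumes "stabilizer_state n v" "x \<in> pts n" "x \<notin> weyl_set n v"
  shows "expect n v x = 0"
proof -
  have "(\<Sum>x\<in>pts n - weyl_set n v. (cmod (expect n v x))\<^sup>2) = 0"
    using card_weyl_set_parseval[of n v] assms(1) by (simp add: stabilizer_state_iff)
  then show ?thesis
    using assms(2,3) by (simp add: sum_nonneg_eq_0_iff)
qed

lemma sum_weyl_set_expect_mult:
  assumes "stabilizer_state n phi"
  shows "(\<Sum>x\<in>weyl_set n phi. expect n phi x * expect n psi x)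
     = 2 ^ n * complex_of_real ((cmod (inner_n n phi psi))\<^sup>2)"
proof -
  have "(\<Sum>x\<in>weyl_set n phi. expect n phi x * expect n psi x)
      = (\<Sum>x\<in>pts n. expect n phi x * expect n psi x)"
    using expect_eq_0_stabilizer[OF assms] weyl_set_subset_pts
    by (intro sum.mono_neutral_left) auto
  then show ?thesis
    by (simp add: sum_pts_expect_mult)
qed

section \<open>Symplectic complements\<close>

lemma finite_f2_subspace: "f2_subspace n G \<Longrightarrow> finite G"
  using finite_subset[OF _ finite_pts] by (auto simp: f2_subspace_def)

lemma pzero_in_f2_subspace: "f2_subspace n G \<Longrightarrow> pzero n \<in> G"
  by (simp add: f2_subspace_def pzero_def)

definition symp_perp :: "nat \<Rightarrow> (bool list \<times> bool list) set \<Rightarrow> (bool list \<times> bool list) set" where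
  "symp_perp n G = {w \<in> pts n. \<forall>t\<in>G. even (symp_form w t)}"

lemma sum_f2_subspace_neg_one_power_symp_form:
  assumes G: "f2_subspace n G" and w: "w \<in> pts n"
  shows "(\<Sum>t\<in>G. (-1::complex) ^ symp_form w t) = (if w \<in> symp_perp n G then of_nat (card G) else 0)"
proof (cases "w \<in> symp_perp n G")
  case False
  then obtain t0 where t0: "t0 \<in> G" "odd (symp_form w t0)"
    using w by (auto simp: symp_perp_def)
  have GP: "G \<subseteq> pts n" and closed: "\<And>t. t \<in> G \<Longrightarrow> padd t t0 \<in> G"
    using G t0 by (auto simp: f2_subspace_def)
  have cancel: "\<And>t. t \<in> G \<Longrightarrow> padd (padd t t0) t0 = t"
    using GP t0 by (auto intro: padd_padd_cancel)
  have "(\<Sum>t\<in>G. (-1::complex) ^ symp_form w t) = (\<Sum>t\<in>G. (-1::complex) ^ symp_form w (padd t t0))"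
    by (rule sum.reindex_bij_witness[where i="\<lambda>t. padd t t0" and j="\<lambda>t. padd t t0"])
      (simp_all add: closed cancel)
  also have "\<dots> = - (\<Sum>t\<in>G. (-1::complex) ^ symp_form w t)"
    unfolding sum_negf[symmetric]
  proof (intro sum.cong refl)
    fix t assume "t \<in> G"
    then have "t \<in> pts n" "t0 \<in> pts n"
      using GP t0 by auto
    then show "(-1::complex) ^ symp_form w (padd t t0) = - ((-1) ^ symp_form w t)"
      using neg_one_power_symp_form_padd[of t n t0 w] w t0(2) by (simp add: symp_form_commute[of w])
  qed
  finally show ?thesis
    using False by simp
qed (simp add: symp_perp_def)

lemma card_mult_card_symp_perp:
  assumes G: "f2_subspace n G"
  shows "card G * card (symp_perp n G) = 2 ^ n * 2 ^ n"
proof -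
  have "complex_of_nat (card G * card (symp_perp n G))
      = (\<Sum>w\<in>pts n. if w \<in> symp_perp n G then of_nat (card G) else 0)"
    by (simp add: sum.If_cases symp_perp_def Int_absorb1 Int_def)
  also have "\<dots> = (\<Sum>w\<in>pts n. \<Sum>t\<in>G. (-1::complex) ^ symp_form w t)"
    by (simp add: sum_f2_subspace_neg_one_power_symp_form[OF G])
  also have "\<dots> = (\<Sum>t\<in>G. \<Sum>w\<in>pts n. (-1::complex) ^ symp_form w t)"
    by (rule sum.swap)
  also have "\<dots> = (\<Sum>t\<in>G. if t = pzero n then 2 ^ n * 2 ^ n else 0)"
    using G by (intro sum.cong refl) (auto simp: sum_pts_neg_one_power_symp_form f2_subspace_def)
  also have "\<dots> = of_nat (2 ^ n * 2 ^ n)"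
    using pzero_in_f2_subspace[OF G] finite_f2_subspace[OF G] by simp
  finally show ?thesis
    by (simp only: of_nat_eq_iff)
qed

text \<open>Counting with \<open>|G| |G\<^sup>\<bottom>| = 4^n\<close> shows that \<open>T \<subset> S\<close> forces \<open>S\<^sup>\<bottom> \<subset> T\<^sup>\<bottom>\<close>.\<close>
lemma exists_symp_form_separating:
  assumes T: "f2_subspace n T" and S: "f2_subspace n S" and TS: "T \<subset> S"
  shows "\<exists>w\<in>pts n. (\<forall>t\<in>T. even (symp_form t w)) \<and> (\<exists>x0\<in>S. odd (symp_form x0 w))"
proof -
  have lt: "card T < card S"
    using TS finite_f2_subspace[OF S] by (rule psubset_card_mono[rotated])
  have prod: "card T * card (symp_perp n T) = card S * card (symp_perp n S)"
    using card_mult_card_symp_perp[OF T] card_mult_card_symp_perp[OF S] by simp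
  have "\<not> symp_perp n T \<subseteq> symp_perp n S"
  proof
    assume sub: "symp_perp n T \<subseteq> symp_perp n S"
    have "finite (symp_perp n S)"
      by (rule finite_subset[of _ "pts n"]) (auto simp: symp_perp_def)
    then have "card T * card (symp_perp n T) \<le> card T * card (symp_perp n S)"
      using sub by (simp add: card_mono)
    also have "\<dots> < card S * card (symp_perp n S)"
    proof (rule mult_less_mono1[OF lt])
      show "0 < card (symp_perp n S)"
        using card_mult_card_symp_perp[OF S] by (cases "card (symp_perp n S)") auto
    qed
    finally show False
      using prod by simp
  qed
  then obtain w x0 where w: "w \<in> symp_perp n T" and "x0 \<in> S" "odd (symp_form w x0)"
    by (auto simp: symp_perp_def)
  moreover have "w \<in> pts n" "\<forall>t\<in>T. even (symp_form t w)" "odd (symp_form x0 w)"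
    using w \<open>odd (symp_form w x0)\<close> by (auto simp: symp_perp_def symp_form_commute[of w])
  ultimately show ?thesis
    by blast
qed

section \<open>Competitor stabilizer states\<close>

definition symp_kernel ::
  "(bool list \<times> bool list) set \<Rightarrow> bool list \<times> bool list \<Rightarrow> (bool list \<times> bool list) set" where
  "symp_kernel S w = {x \<in> S. even (symp_form x w)}"

lemma padd_in_symp_kernel_iff:
  assumes S: "f2_subspace n S" and w: "w \<in> pts n" and xy: "x \<in> S" "y \<in> S"
  shows "padd x y \<in> symp_kernel S w \<longleftrightarrow> (x \<in> symp_kernel S w \<longleftrightarrow> y \<in> symp_kernel S w)"
proof -
  have "x \<in> pts n" "y \<in> pts n" "padd x y \<in> S"
    using S xy by (auto simp: f2_subspace_def)
  then show ?thesis
    using even_symp_form_padd[of x n y w] w xy by (auto simp: symp_kernel_def)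
qed

lemma f2_subspace_symp_kernel:
  assumes S: "f2_subspace n S" and w: "w \<in> pts n"
  shows "f2_subspace n (symp_kernel S w)"
proof -
  have "pzero n \<in> symp_kernel S w"
    using pzero_in_f2_subspace[OF S] by (simp add: symp_kernel_def)
  moreover have "padd x y \<in> symp_kernel S w" if "x \<in> symp_kernel S w" "y \<in> symp_kernel S w" for x y
    using that padd_in_symp_kernel_iff[OF S w, of x y] by (auto simp: symp_kernel_def)
  moreover have "symp_kernel S w \<subseteq> pts n"
    using S by (auto simp: f2_subspace_def symp_kernel_def)
  ultimately show ?thesis
    by (simp add: f2_subspace_def pzero_def)
qed

lemma card_symp_kernel:
  assumes S: "f2_subspace n S" and w: "w \<in> pts n" and x0: "x0 \<in> S" "odd (symp_form x0 w)"
  shows "2 * card (symp_kernel S w) = card S"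
proof -
  let ?H = "symp_kernel S w"
  have x0H: "x0 \<in> S - ?H"
    using x0 by (simp add: symp_kernel_def)
  have SP: "S \<subseteq> pts n"
    using S by (simp add: f2_subspace_def)
  have HS: "?H \<subseteq> S"
    by (auto simp: symp_kernel_def)
  have "bij_betw (\<lambda>h. padd h x0) ?H (S - ?H)"
  proof (rule bij_betw_byWitness[where f' = "\<lambda>h. padd h x0"])
    show "\<forall>h\<in>?H. padd (padd h x0) x0 = h" "\<forall>h\<in>S - ?H. padd (padd h x0) x0 = h"
      using HS SP x0 by (auto intro: padd_padd_cancel)
    have "padd h x0 \<in> S" if "h \<in> S" for h
      using S that x0 by (simp add: f2_subspace_def)
    then show "(\<lambda>h. padd h x0) ` ?H \<subseteq> S - ?H" "(\<lambda>h. padd h x0) ` (S - ?H) \<subseteq> ?H"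
      using padd_in_symp_kernel_iff[OF S w _ x0(1)] x0H HS by (auto intro!: image_subsetI)
  qed
  then have "card (S - ?H) = card ?H"
    by (simp add: bij_betw_same_card)
  moreover have "card (S - ?H) = card S - card ?H" "card ?H \<le> card S"
    using HS finite_f2_subspace[OF S] finite_subset[OF HS]
    by (simp_all add: card_Diff_subset card_mono)
  ultimately show ?thesis
    by simp
qed

lemma card_Un_padd_image:
  assumes H: "f2_subspace n H" and w: "w \<in> pts n" "w \<notin> H"
  shows "card (H \<union> padd w ` H) = 2 * card H"
proof -
  have HP: "H \<subseteq> pts n"
    using H by (simp add: f2_subspace_def)
  have "H \<inter> padd w ` H = {}"
  proof (rule ccontr)
    assume "H \<inter> padd w ` H \<noteq> {}"
    then obtain t where t: "t \<in> H" "padd w t \<in> H"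
      by auto
    then have "padd (padd w t) t \<in> H"
      using H by (simp add: f2_subspace_def)
    moreover have "padd (padd w t) t = w"
      using t HP w by (intro padd_padd_cancel) auto
    ultimately show False
      using w by simp
  qed
  moreover have "inj_on (padd w) H"
  proof (rule inj_onI)
    fix t1 t2 assume "t1 \<in> H" "t2 \<in> H" "padd w t1 = padd w t2"
    then show "t1 = t2"
      using HP w padd_padd_cancel[of t1 n w] padd_padd_cancel[of t2 n w]
      by (auto simp: padd_commute[of w])
  qed
  ultimately show ?thesis
    using finite_f2_subspace[OF H] by (simp add: card_Un_disjoint card_image)
qed

lemma unit_state_weyl_apply: "unit_state n v \<Longrightarrow> w \<in> pts n \<Longrightarrow> unit_state n (weyl_apply w v)"
  by (simp add: unit_state_def inner_n_weyl_apply_weyl_apply)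

lemma weyl_set_subset_weyl_apply:
  assumes "w \<in> pts n"
  shows "weyl_set n v \<subseteq> weyl_set n (weyl_apply w v)"
proof
  fix x assume "x \<in> weyl_set n v"
  then obtain l where "x \<in> pts n" "weyl_eigen n v x l" "l = 1 \<or> l = -1"
    by (auto simp: weyl_set_iff)
  then show "x \<in> weyl_set n (weyl_apply w v)"
    using weyl_eigen_conj[OF _ assms, of x v l]
    by (auto simp: weyl_set_iff minus_one_power_iff split: if_splits)
qed

lemma weyl_set_weyl_apply:
  assumes "stabilizer_state n phi" "w \<in> pts n"
  shows "weyl_set n (weyl_apply w phi) = weyl_set n phi"
proof -
  have "unit_state n phi" "card (weyl_set n phi) = 2 ^ n"
    using assms(1) by (simp_all add: stabilizer_state_iff)
  then show ?thesis
    using weyl_set_subset_weyl_apply[OF assms(2), of phi]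
      card_weyl_set_le[OF unit_state_weyl_apply[OF _ assms(2)]]
    by (metis card_seteq finite_weyl_set)
qed

lemma stabilizer_state_weyl_apply:
  "stabilizer_state n phi \<Longrightarrow> w \<in> pts n \<Longrightarrow> stabilizer_state n (weyl_apply w phi)"
  by (simp add: stabilizer_state_iff weyl_set_weyl_apply unit_state_weyl_apply)

lemma card_symp_kernel_weyl_set:
  assumes "stabilizer_state n phi" "w \<in> pts n" "x0 \<in> weyl_set n phi" "odd (symp_form x0 w)"
  shows "2 * card (symp_kernel (weyl_set n phi) w) = 2 ^ n"
proof -
  have "unit_state n phi" "card (weyl_set n phi) = 2 ^ n"
    using assms(1) by (simp_all add: stabilizer_state_iff)
  then show ?thesis
    using card_symp_kernel[OF f2_subspace_weyl_set assms(2-4)] by simp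
qed

text \<open>\<open>W_x0\<close> has \<open>phi\<close> as an eigenvector but anticommutes with \<open>W_w\<close>, so it maps \<open>W_w phi\<close> to
  the opposite eigenvalue.\<close>
lemma inner_n_weyl_apply_anticommuting:
  assumes x0: "x0 \<in> weyl_set n phi" and w: "w \<in> pts n" and odd: "odd (symp_form x0 w)"
  shows "inner_n n phi (weyl_apply w phi) = 0"
proof -
  obtain l where x0p: "x0 \<in> pts n" and l: "weyl_eigen n phi x0 l" "l = 1 \<or> l = -1"
    using x0 by (auto simp: weyl_set_iff)
  have l': "weyl_eigen n (weyl_apply w phi) x0 (- l)"
    using weyl_eigen_conj[OF x0p w l(1)] odd by simp
  have "- l * inner_n n phi (weyl_apply w phi) = inner_n n phi (weyl_apply x0 (weyl_apply w phi))"
    unfolding inner_n_scale_right[symmetric] using l'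
    by (intro inner_n_cong) (auto simp: weyl_eigen_def)
  also have "\<dots> = inner_n n (weyl_apply x0 phi) (weyl_apply w phi)"
    by (rule inner_n_weyl_apply_self_adjoint[OF x0p])
  also have "\<dots> = cnj l * inner_n n phi (weyl_apply w phi)"
    unfolding inner_n_scale_left[symmetric] using l(1)
    by (intro inner_n_cong) (auto simp: weyl_eigen_def)
  finally show ?thesis
    using l(2) by auto
qed

lemma stabilizer_stateI:
  "unit_state n v \<Longrightarrow> S \<subseteq> weyl_set n v \<Longrightarrow> card S = 2 ^ n \<Longrightarrow> stabilizer_state n v"
  unfolding stabilizer_state_def
  using weyl_set_subset_pts by (intro conjI exI[of _ S]) (auto simp: weyl_set_def)

lemma unit_state_orthogonal_superposition:
  assumes "unit_state n u" "unit_state n v" "inner_n n u v = 0" "(cmod a)\<^sup>2 + (cmod b)\<^sup>2 = 1"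
  shows "unit_state n (\<lambda>d. a * u d + b * v d)"
proof -
  have "inner_n n v u = 0"
    using assms(3) cnj_inner_n[of n u v] by simp
  then have "inner_n n (\<lambda>d. a * u d + b * v d) (\<lambda>d. a * u d + b * v d) = cnj a * a + cnj b * b"
    using assms by (simp add: inner_n_linear_left inner_n_linear_right unit_state_def)
  also have "\<dots> = complex_of_real ((cmod a)\<^sup>2 + (cmod b)\<^sup>2)"
    unfolding of_real_add complex_norm_square by (simp add: mult.commute)
  finally show ?thesis
    using assms(4) by (simp add: unit_state_def)
qed

lemma weyl_eigen_superposition:
  "weyl_eigen n u x l \<Longrightarrow> weyl_eigen n v x l \<Longrightarrow> weyl_eigen n (\<lambda>d. a * u d + b * v d) x l"
  by (simp add: weyl_eigen_def weyl_apply_linear algebra_simps)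

text \<open>\<open>(phi \<plusminus> W_w phi) / sqrt 2\<close> is stabilized by the index-two subgroup \<open>H\<close> of \<open>Weyl(phi)\<close>
  commuting with \<open>W_w\<close>, and by \<open>W_w\<close> itself.\<close>
lemma stabilizer_state_superposition:
  assumes st: "stabilizer_state n phi"
    and H: "f2_subspace n H" "H \<subseteq> weyl_set n phi" "2 * card H = 2 ^ n"
    and w: "w \<in> pts n" "\<forall>t\<in>H. even (symp_form t w)"
    and x0: "x0 \<in> weyl_set n phi" "odd (symp_form x0 w)"
    and s: "s = 1 \<or> s = -1" and a: "(cmod a)\<^sup>2 = 1 / 2"
  shows "stabilizer_state n (\<lambda>d. a * phi d + s * a * weyl_apply w phi d)"
proof -
  define chi where "chi = (\<lambda>d. a * phi d + s * a * weyl_apply w phi d)"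
  have uphi: "unit_state n phi"
    using st by (simp add: stabilizer_state_iff)
  have uchi: "unit_state n chi"
    unfolding chi_def
    using unit_state_weyl_apply[OF uphi w(1)] inner_n_weyl_apply_anticommuting[OF x0(1) w(1) x0(2)] a s
    by (intro unit_state_orthogonal_superposition[OF uphi]) (auto simp: norm_mult)
  have "t \<in> weyl_set n chi" if t: "t \<in> H" for t
  proof -
    obtain l where l: "t \<in> pts n" "weyl_eigen n phi t l" "l = 1 \<or> l = -1"
      using subsetD[OF H(2) t] by (auto simp: weyl_set_iff)
    then have "weyl_eigen n (weyl_apply w phi) t l"
      using weyl_eigen_conj[OF l(1) w(1) l(2)] w(2) t by simp
    then show ?thesis
      using l unfolding chi_def by (auto simp: weyl_set_iff intro: weyl_eigen_superposition)
  qed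
  moreover have "w \<in> weyl_set n chi"
  proof -
    have "weyl_eigen n chi w s"
      using s by (auto simp: weyl_eigen_def chi_def weyl_apply_linear weyl_apply_involution[OF w(1)])
    then show ?thesis
      using w(1) s by (auto simp: weyl_set_iff)
  qed
  ultimately have "H \<union> padd w ` H \<subseteq> weyl_set n chi"
    using padd_in_weyl_set[OF uchi] by blast
  moreover have "w \<notin> H"
    using H(2) x0(2) even_symp_form_weyl_set[OF uphi x0(1), of w] by blast
  then have "card (H \<union> padd w ` H) = 2 ^ n"
    using card_Un_padd_image[OF H(1) w(1)] H(3) by simp
  ultimately show ?thesis
    unfolding chi_def[symmetric] by (rule stabilizer_stateI[OF uchi])
qed

section \<open>Maximal fidelity\<close>

lemma cmod_inner_n_le_1:
  assumes "unit_state n u" "unit_state n v"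
  shows "cmod (inner_n n u v) \<le> 1"
proof -
  have sq: "(\<Sum>d\<in>bits n. (cmod (f d))\<^sup>2) = 1" if "unit_state n f" for f
  proof -
    have "complex_of_real (\<Sum>d\<in>bits n. (cmod (f d))\<^sup>2) = (\<Sum>d\<in>bits n. cnj (f d) * f d)"
      unfolding of_real_sum complex_norm_square by (simp add: mult.commute)
    also have "\<dots> = 1"
      using that by (simp add: unit_state_def inner_n_def)
    finally show ?thesis
      by (simp only: of_real_eq_1_iff)
  qed
  have "cmod (inner_n n u v) \<le> (\<Sum>d\<in>bits n. cmod (cnj (u d) * v d))"
    unfolding inner_n_def by (rule norm_sum)
  also have "\<dots> \<le> (\<Sum>d\<in>bits n. ((cmod (u d))\<^sup>2 + (cmod (v d))\<^sup>2) / 2)"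
  proof (rule sum_mono)
    fix d
    have "0 \<le> (cmod (u d) - cmod (v d))\<^sup>2"
      by simp
    then show "cmod (cnj (u d) * v d) \<le> ((cmod (u d))\<^sup>2 + (cmod (v d))\<^sup>2) / 2"
      by (simp add: norm_mult power2_eq_square algebra_simps)
  qed
  also have "\<dots> = 1"
    using sq[OF assms(1)] sq[OF assms(2)] by (simp add: sum.distrib flip: sum_divide_distrib)
  finally show ?thesis .
qed

lemma stab_fidelity_ge:
  assumes "unit_state n psi" "stabilizer_state n chi"
  shows "(cmod (inner_n n chi psi))\<^sup>2 \<le> stab_fidelity n psi"
  unfolding stab_fidelity_def
proof (rule cSup_upper)
  show "(cmod (inner_n n chi psi))\<^sup>2 \<in> {(cmod (inner_n n phi psi))\<^sup>2 |phi. stabilizer_state n phi}"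
    using assms(2) by auto
  have "(cmod (inner_n n phi psi))\<^sup>2 \<le> 1" if "stabilizer_state n phi" for phi
    using that cmod_inner_n_le_1[OF _ assms(1), of phi]
    by (simp add: stabilizer_state_iff power_le_one)
  then show "bdd_above {(cmod (inner_n n phi psi))\<^sup>2 |phi. stabilizer_state n phi}"
    by (auto intro: bdd_aboveI[where M = 1])
qed

text \<open>Comparing \<open>phi\<close> with the competitors \<open>(phi \<plusminus> W_w phi) / sqrt 2\<close>.\<close>
lemma Re_cross_term_bound:
  assumes psi: "unit_state n psi" and st: "stabilizer_state n phi"
    and max: "(cmod (inner_n n phi psi))\<^sup>2 = stab_fidelity n psi"
    and H: "f2_subspace n H" "H \<subseteq> weyl_set n phi" "2 * card H = 2 ^ n"
    and w: "w \<in> pts n" "\<forall>t\<in>H. even (symp_form t w)"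
    and x0: "x0 \<in> weyl_set n phi" "odd (symp_form x0 w)"
  shows "2 * \<bar>Re (cnj (inner_n n phi psi) * inner_n n (weyl_apply w phi) psi)\<bar>
     \<le> (cmod (inner_n n phi psi))\<^sup>2 - (cmod (inner_n n (weyl_apply w phi) psi))\<^sup>2"
proof -
  define a where "a = complex_of_real (1 / sqrt 2)"
  define c0 where "c0 = inner_n n phi psi"
  define c1 where "c1 = inner_n n (weyl_apply w phi) psi"
  have a2: "(cmod a)\<^sup>2 = 1 / 2"
    unfolding a_def norm_of_real by (simp add: power_divide)
  have competitor: "(cmod (c0 + s * c1))\<^sup>2 \<le> 2 * (cmod c0)\<^sup>2" if s: "s = 1 \<or> s = -1" for s
  proof -
    have "inner_n n (\<lambda>d. a * phi d + s * a * weyl_apply w phi d) psi = a * (c0 + s * c1)"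
      unfolding inner_n_linear_left using s by (auto simp: a_def c0_def c1_def algebra_simps)
    then have "(cmod (a * (c0 + s * c1)))\<^sup>2 \<le> (cmod c0)\<^sup>2"
      using stab_fidelity_ge[OF psi stabilizer_state_superposition[OF st H w x0 s a2]] max
      by (simp add: c0_def)
    then show ?thesis
      using a2 by (simp add: norm_mult power_mult_distrib)
  qed
  have "(cmod (c0 + c1))\<^sup>2 = (cmod c0)\<^sup>2 + (cmod c1)\<^sup>2 + 2 * Re (cnj c0 * c1)"
    "(cmod (c0 - c1))\<^sup>2 = (cmod c0)\<^sup>2 + (cmod c1)\<^sup>2 - 2 * Re (cnj c0 * c1)"
    unfolding cmod_power2 by (simp_all add: power2_eq_square algebra_simps)
  then show ?thesis
    using competitor[of 1] competitor[of "-1"] by (simp add: abs_if c0_def c1_def)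
qed

lemma weyl_apply_padd_anticommuting:
  assumes x0: "x0 \<in> weyl_set n phi" and w: "w \<in> pts n" and odd: "odd (symp_form x0 w)"
  obtains mu where "mu = \<i> \<or> mu = - \<i>"
    and "\<And>d. d \<in> bits n \<Longrightarrow> weyl_apply (padd w x0) phi d = mu * weyl_apply w phi d"
proof -
  obtain l where x0p: "x0 \<in> pts n" and l: "weyl_eigen n phi x0 l" "l = 1 \<or> l = -1"
    using x0 by (auto simp: weyl_set_iff)
  have phase: "(weyl_phase w x0)\<^sup>2 = -1"
    using weyl_phase_square[OF w x0p] odd by (simp add: symp_form_commute[of w])
  define mu where "mu = l / weyl_phase w x0"
  have "mu\<^sup>2 = \<i>\<^sup>2"
    using l(2) phase by (auto simp: mu_def power_divide)
  then have "mu = \<i> \<or> mu = - \<i>"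
    by (simp only: power2_eq_iff)
  moreover have "weyl_apply (padd w x0) phi d = mu * weyl_apply w phi d" if d: "d \<in> bits n" for d
  proof -
    have "weyl_phase w x0 * weyl_apply (padd w x0) phi d = weyl_apply w (\<lambda>e. l * phi e) d"
      using l(1) by (simp add: weyl_apply_weyl_apply[OF w x0p d, symmetric] weyl_eigen_def
          cong: weyl_apply_cong[OF w d])
    moreover have "weyl_phase w x0 \<noteq> 0"
      using phase by auto
    ultimately show ?thesis
      by (simp add: mu_def weyl_apply_scale field_simps)
  qed
  ultimately show ?thesis
    using that by blast
qed

text \<open>Applying the same comparison to \<open>w + x0\<close>, for which \<open>W_(w+x0) phi = \<plusminus>i W_w phi\<close>.\<close>
lemma Im_cross_term_bound:
  assumes psi: "unit_state n psi" and st: "stabilizer_state n phi"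
    and max: "(cmod (inner_n n phi psi))\<^sup>2 = stab_fidelity n psi"
    and H: "f2_subspace n H" "H \<subseteq> weyl_set n phi" "2 * card H = 2 ^ n"
    and w: "w \<in> pts n" "\<forall>t\<in>H. even (symp_form t w)"
    and x0: "x0 \<in> weyl_set n phi" "odd (symp_form x0 w)"
  shows "2 * \<bar>Im (cnj (inner_n n phi psi) * inner_n n (weyl_apply w phi) psi)\<bar>
     \<le> (cmod (inner_n n phi psi))\<^sup>2 - (cmod (inner_n n (weyl_apply w phi) psi))\<^sup>2"
proof -
  have uphi: "unit_state n phi"
    using st by (simp add: stabilizer_state_iff)
  have x0p: "x0 \<in> pts n"
    using x0 weyl_set_subset_pts by blast
  obtain mu where mu: "mu = \<i> \<or> mu = - \<i>"
    and W: "\<And>d. d \<in> bits n \<Longrightarrow> weyl_apply (padd w x0) phi d = mu * weyl_apply w phi d"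
    using weyl_apply_padd_anticommuting[OF x0(1) w(1) x0(2)] by blast
  have comm: "even (symp_form t (padd w x0)) \<longleftrightarrow> even (symp_form t w)" if "t \<in> weyl_set n phi" for t
    using that even_symp_form_padd[OF w(1) x0p, of t] even_symp_form_weyl_set[OF uphi that x0(1)]
      weyl_set_subset_pts by (auto simp: symp_form_commute[of t])
  have "\<forall>t\<in>H. even (symp_form t (padd w x0))" "odd (symp_form x0 (padd w x0))"
    using comm H(2) w(2) x0 by blast+
  then have "2 * \<bar>Re (cnj (inner_n n phi psi) * inner_n n (weyl_apply (padd w x0) phi) psi)\<bar>
      \<le> (cmod (inner_n n phi psi))\<^sup>2 - (cmod (inner_n n (weyl_apply (padd w x0) phi) psi))\<^sup>2"
    by (rule Re_cross_term_bound[OF psi st max H padd_in_pts[OF w(1) x0p] _ x0(1)])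
  moreover have "inner_n n (weyl_apply (padd w x0) phi) psi = cnj mu * inner_n n (weyl_apply w phi) psi"
    unfolding inner_n_scale_left[symmetric] by (rule inner_n_cong) (simp_all add: W)
  ultimately show ?thesis
    using mu by (auto simp: norm_mult abs_minus_commute)
qed

lemma cross_term_bound:
  assumes psi: "unit_state n psi" and st: "stabilizer_state n phi"
    and max: "(cmod (inner_n n phi psi))\<^sup>2 = stab_fidelity n psi"
    and w: "w \<in> pts n" and x0: "x0 \<in> weyl_set n phi" "odd (symp_form x0 w)"
  defines "u \<equiv> (cmod (inner_n n phi psi))\<^sup>2" and "v \<equiv> (cmod (inner_n n (weyl_apply w phi) psi))\<^sup>2"
  shows "2 * u * v \<le> (u - v)\<^sup>2"
proof -
  define H where "H = symp_kernel (weyl_set n phi) w"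
  define z where "z = cnj (inner_n n phi psi) * inner_n n (weyl_apply w phi) psi"
  have "unit_state n phi"
    using st by (simp add: stabilizer_state_iff)
  then have H: "f2_subspace n H" "H \<subseteq> weyl_set n phi" "2 * card H = 2 ^ n"
    "\<forall>t\<in>H. even (symp_form t w)"
    using f2_subspace_symp_kernel[OF f2_subspace_weyl_set w] card_symp_kernel_weyl_set[OF st w x0]
    by (auto simp: H_def symp_kernel_def)
  have Re: "2 * \<bar>Re z\<bar> \<le> u - v" and Im: "2 * \<bar>Im z\<bar> \<le> u - v"
    using Re_cross_term_bound[OF psi st max H(1-3) w H(4) x0]
      Im_cross_term_bound[OF psi st max H(1-3) w H(4) x0]
    by (simp_all add: z_def u_def v_def)
  then have "(2 * Re z)\<^sup>2 \<le> (u - v)\<^sup>2" "(2 * Im z)\<^sup>2 \<le> (u - v)\<^sup>2"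
    using power_mono[OF Re, of 2] power_mono[OF Im, of 2] by (simp_all add: power_mult_distrib)
  moreover have "(Re z)\<^sup>2 + (Im z)\<^sup>2 = u * v"
    unfolding cmod_power2[symmetric] by (simp add: z_def u_def v_def norm_mult power_mult_distrib)
  ultimately show ?thesis
    by (simp add: power_mult_distrib)
qed

lemma sqrt3_product_bound:
  fixes u v :: real
  assumes v: "0 \<le> v" "v \<le> u" and uv: "2 * u * v \<le> (u - v)\<^sup>2"
  shows "(2 - sqrt 3) / 2 * u ^ 4 \<le> (u + v)\<^sup>2 / 2 * ((u - v)\<^sup>2 / 2)"
proof -
  define s where "s = sqrt 3"
  have s2: "s * s = 3" and s1: "1 < s" and s2': "s < 2"
    by (simp_all add: s_def real_less_lsqrt real_sqrt_less_iff)
  have roots: "(v - (2 - s) * u) * (v - (2 + s) * u) = v * v - 4 * u * v + u * u"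
    using s2 by (simp add: algebra_simps)
  have "v \<le> (2 - s) * u"
  proof (rule ccontr)
    assume "\<not> v \<le> (2 - s) * u"
    then have "0 < v - (2 - s) * u" "v - (2 + s) * u < 0"
      using v s1 by (auto simp: algebra_simps intro: less_le_trans[of _ 0] mult_pos_pos)
    then have "v * v - 4 * u * v + u * u < 0"
      unfolding roots[symmetric] by (rule mult_pos_neg)
    then show False
      using uv by (simp add: power2_eq_square algebra_simps)
  qed
  moreover have "u \<le> s * u"
    using mult_right_mono[of 1 s u] s1 v by simp
  ultimately have "((s - 1) * u)\<^sup>2 \<le> (u - v)\<^sup>2"
    by (intro power_mono) (simp_all add: algebra_simps)
  moreover have "((s - 1) * u)\<^sup>2 = (4 - 2 * s) * u\<^sup>2"
    using s2 by (simp add: power2_eq_square algebra_simps)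
  moreover have "u\<^sup>2 \<le> (u + v)\<^sup>2"
    using v by (simp add: power_mono)
  ultimately have "(4 - 2 * s) * u\<^sup>2 * u\<^sup>2 \<le> (u - v)\<^sup>2 * (u + v)\<^sup>2"
    using s2' by (intro mult_mono) auto
  then show ?thesis
    by (simp add: s_def power2_eq_square power4_eq_xxxx field_simps)
qed

section \<open>Masses of \<open>p_psi\<close> and \<open>q_psi\<close>\<close>

lemma mass_lower_bound:
  fixes f g :: "'a \<Rightarrow> complex" and N c :: real
  assumes "N > 0" "2 * real (card A) = N" "\<forall>x\<in>A. cmod (f x) = 1"
    and "(\<Sum>x\<in>A. f x * g x) = complex_of_real (N * c / 2)"
  shows "c\<^sup>2 / 2 \<le> (\<Sum>x\<in>A. (cmod (g x))\<^sup>2) / N"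
proof -
  have bound: "\<bar>N * c / 2\<bar> \<le> (\<Sum>x\<in>A. cmod (g x))"
    using norm_sum[of "\<lambda>x. f x * g x" A] assms(3,4) by (simp add: norm_mult abs_mult)
  have "(N * c / 2)\<^sup>2 \<le> (\<Sum>x\<in>A. cmod (g x))\<^sup>2"
    using power_mono[OF bound abs_ge_zero, of 2] by (simp only: power2_abs)
  also have "\<dots> \<le> (\<Sum>x\<in>A. (cmod (g x))\<^sup>2) * real (card A)"
    by (rule sum_squared_le_sum_of_squares)
  also have "real (card A) = N / 2"
    using assms(2) by simp
  finally have "N * (N * c\<^sup>2 / 2) \<le> N * (\<Sum>x\<in>A. (cmod (g x))\<^sup>2)"
    by (simp add: power2_eq_square field_simps)
  then show ?thesis
    using assms(1) by (simp add: field_simps)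
qed

lemma sum_weyl_set_signed_expect_mult:
  assumes st: "stabilizer_state n phi" and w: "w \<in> pts n"
  shows "(\<Sum>x\<in>weyl_set n phi. (-1) ^ symp_form x w * (expect n phi x * expect n psi x))
     = 2 ^ n * complex_of_real ((cmod (inner_n n (weyl_apply w phi) psi))\<^sup>2)"
proof -
  have "(\<Sum>x\<in>weyl_set n phi. (-1) ^ symp_form x w * (expect n phi x * expect n psi x))
      = (\<Sum>x\<in>weyl_set n (weyl_apply w phi). expect n (weyl_apply w phi) x * expect n psi x)"
    unfolding weyl_set_weyl_apply[OF st w]
  proof (intro sum.cong refl)
    fix x assume "x \<in> weyl_set n phi"
    then have "x \<in> pts n"
      using weyl_set_subset_pts by blast
    then show "(-1) ^ symp_form x w * (expect n phi x * expect n psi x)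
        = expect n (weyl_apply w phi) x * expect n psi x"
      by (simp add: expect_weyl_apply[OF _ w])
  qed
  then show ?thesis
    by (simp add: sum_weyl_set_expect_mult[OF stabilizer_state_weyl_apply[OF st w]])
qed

lemma
  fixes psi :: "bool list \<Rightarrow> complex"
  assumes st: "stabilizer_state n phi" and w: "w \<in> pts n"
  defines "S \<equiv> weyl_set n phi" and "H \<equiv> symp_kernel (weyl_set n phi) w"
    and "u \<equiv> (cmod (inner_n n phi psi))\<^sup>2" and "v \<equiv> (cmod (inner_n n (weyl_apply w phi) psi))\<^sup>2"
  shows sum_symp_kernel_expect_mult:
      "(\<Sum>x\<in>H. expect n phi x * expect n psi x) = complex_of_real (2 ^ n * (u + v) / 2)"
    and sum_symp_kernel_complement_expect_mult:
      "(\<Sum>x\<in>S - H. expect n phi x * expect n psi x) = complex_of_real (2 ^ n * (u - v) / 2)"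
proof -
  define f where "f x = expect n phi x * expect n psi x" for x
  have HS: "H \<subseteq> S"
    by (auto simp: H_def S_def symp_kernel_def)
  have split: "(\<Sum>x\<in>S. g x) = (\<Sum>x\<in>H. g x) + (\<Sum>x\<in>S - H. g x)" for g :: "_ \<Rightarrow> complex"
    using sum.subset_diff[OF HS] by (simp add: S_def add.commute)
  have "(\<Sum>x\<in>H. f x) + (\<Sum>x\<in>S - H. f x) = 2 ^ n * complex_of_real u"
    using sum_weyl_set_expect_mult[OF st, of psi] split[of f] by (simp add: f_def S_def u_def)
  moreover have "(\<Sum>x\<in>H. f x) - (\<Sum>x\<in>S - H. f x) = 2 ^ n * complex_of_real v"
  proof -
    have "(\<Sum>x\<in>H. (-1) ^ symp_form x w * f x) = (\<Sum>x\<in>H. f x)"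
      by (intro sum.cong refl) (simp add: H_def symp_kernel_def)
    moreover have "(\<Sum>x\<in>S - H. (-1) ^ symp_form x w * f x) = - (\<Sum>x\<in>S - H. f x)"
      unfolding sum_negf[symmetric] by (intro sum.cong refl) (simp add: H_def S_def symp_kernel_def)
    ultimately show ?thesis
      using split[of "\<lambda>x. (-1) ^ symp_form x w * f x"] sum_weyl_set_signed_expect_mult[OF st w, of psi]
      by (simp add: S_def f_def v_def)
  qed
  ultimately show "(\<Sum>x\<in>H. f x) = complex_of_real (2 ^ n * (u + v) / 2)"
    and "(\<Sum>x\<in>S - H. f x) = complex_of_real (2 ^ n * (u - v) / 2)"
    by (simp_all add: field_simps)
qed

lemma pdist_nonneg: "0 \<le> pdist n psi x"
  by (simp add: pdist_def)

lemma qdist_nonneg: "0 \<le> qdist n psi x"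
  by (simp add: qdist_def pdist_nonneg sum_nonneg)

lemma sum_pdist_eq: "(\<Sum>x\<in>A. pdist n psi x) = (\<Sum>x\<in>A. (cmod (expect n psi x))\<^sup>2) / 2 ^ n"
  by (simp add: pdist_def expect_def sum_divide_distrib)

lemma
  fixes psi :: "bool list \<Rightarrow> complex"
  assumes st: "stabilizer_state n phi" and w: "w \<in> pts n"
    and x0: "x0 \<in> weyl_set n phi" "odd (symp_form x0 w)"
  defines "S \<equiv> weyl_set n phi" and "H \<equiv> symp_kernel (weyl_set n phi) w"
    and "u \<equiv> (cmod (inner_n n phi psi))\<^sup>2" and "v \<equiv> (cmod (inner_n n (weyl_apply w phi) psi))\<^sup>2"
  shows symp_kernel_mass_bound: "(u + v)\<^sup>2 / 2 \<le> (\<Sum>x\<in>H. pdist n psi x)"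
    and symp_kernel_complement_mass_bound: "(u - v)\<^sup>2 / 2 \<le> (\<Sum>x\<in>S - H. pdist n psi x)"
proof -
  have uphi: "unit_state n phi" and cS: "card S = 2 ^ n"
    using st by (simp_all add: stabilizer_state_iff S_def)
  have HS: "H \<subseteq> S" and fin: "finite H"
    using finite_subset[of H S] by (auto simp: H_def S_def symp_kernel_def)
  have cH: "2 * card H = 2 ^ n"
    unfolding H_def by (rule card_symp_kernel_weyl_set[OF st w x0])
  have cN: "2 * card (S - H) = 2 ^ n"
    using cH cS HS fin by (simp add: card_Diff_subset)
  have cHr: "2 * real (card H) = 2 ^ n" and cNr: "2 * real (card (S - H)) = 2 ^ n"
    using arg_cong[OF cH, of real] arg_cong[OF cN, of real] by simp_all
  have unit: "\<forall>x\<in>A. cmod (expect n phi x) = 1" if "A \<subseteq> S" for A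
    using that cmod_expect_weyl_set[OF uphi] unfolding S_def by blast
  show "(u + v)\<^sup>2 / 2 \<le> (\<Sum>x\<in>H. pdist n psi x)"
    unfolding sum_pdist_eq
    using sum_symp_kernel_expect_mult[OF st w, of psi]
    by (intro mass_lower_bound[OF _ cHr unit[OF HS]]) (simp_all add: H_def u_def v_def)
  show "(u - v)\<^sup>2 / 2 \<le> (\<Sum>x\<in>S - H. pdist n psi x)"
    unfolding sum_pdist_eq
    using sum_symp_kernel_complement_expect_mult[OF st w, of psi]
    by (intro mass_lower_bound[OF _ cNr unit]) (simp_all add: H_def S_def u_def v_def)
qed

lemma sum_qdist_ge_mult:
  assumes H: "H \<subseteq> pts n" and N: "N \<subseteq> pts n"
    and closed: "\<And>x y. x \<in> N \<Longrightarrow> y \<in> H \<Longrightarrow> padd x y \<in> N"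
  shows "(\<Sum>y\<in>H. pdist n psi y) * (\<Sum>x\<in>N. pdist n psi x) \<le> (\<Sum>x\<in>N. qdist n psi x)"
proof -
  have shift: "(\<Sum>x\<in>N. pdist n psi (padd x y)) = (\<Sum>x\<in>N. pdist n psi x)" if y: "y \<in> H" for y
  proof -
    have "padd (padd x y) y = x" if "x \<in> N" for x
      using subsetD[OF N that] subsetD[OF H y] by (rule padd_padd_cancel)
    then show ?thesis
      using closed[OF _ y]
      by (intro sum.reindex_bij_witness[where i = "\<lambda>x. padd x y" and j = "\<lambda>x. padd x y"]) simp_all
  qed
  have "(\<Sum>y\<in>H. pdist n psi y) * (\<Sum>x\<in>N. pdist n psi x)
      = (\<Sum>y\<in>H. \<Sum>x\<in>N. pdist n psi y * pdist n psi (padd x y))"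
    unfolding sum_distrib_right by (intro sum.cong refl) (simp add: shift flip: sum_distrib_left)
  also have "\<dots> = (\<Sum>x\<in>N. \<Sum>y\<in>H. pdist n psi y * pdist n psi (padd x y))"
    by (rule sum.swap)
  also have "\<dots> \<le> (\<Sum>x\<in>N. qdist n psi x)"
    unfolding qdist_def using H by (intro sum_mono sum_mono2) (auto simp: pdist_nonneg)
  finally show ?thesis .
qed

lemma symp_kernel_complement_qdist_bound:
  fixes psi :: "bool list \<Rightarrow> complex"
  assumes st: "stabilizer_state n phi" and w: "w \<in> pts n"
    and x0: "x0 \<in> weyl_set n phi" "odd (symp_form x0 w)"
  defines "S \<equiv> weyl_set n phi" and "H \<equiv> symp_kernel (weyl_set n phi) w"
    and "u \<equiv> (cmod (inner_n n phi psi))\<^sup>2" and "v \<equiv> (cmod (inner_n n (weyl_apply w phi) psi))\<^sup>2"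
  shows "(u + v)\<^sup>2 / 2 * ((u - v)\<^sup>2 / 2) \<le> (\<Sum>x\<in>S - H. qdist n psi x)"
proof -
  have S: "f2_subspace n S"
    using st f2_subspace_weyl_set by (simp add: S_def stabilizer_state_iff)
  have "(u + v)\<^sup>2 / 2 * ((u - v)\<^sup>2 / 2) \<le> (\<Sum>x\<in>H. pdist n psi x) * (\<Sum>x\<in>S - H. pdist n psi x)"
    using symp_kernel_mass_bound[OF st w x0, of psi] symp_kernel_complement_mass_bound[OF st w x0, of psi]
    by (intro mult_mono) (simp_all add: S_def H_def u_def v_def sum_nonneg pdist_nonneg)
  also have "\<dots> \<le> (\<Sum>x\<in>S - H. qdist n psi x)"
  proof (rule sum_qdist_ge_mult)
    show "H \<subseteq> pts n" "S - H \<subseteq> pts n"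
      using weyl_set_subset_pts by (auto simp: H_def S_def symp_kernel_def)
    show "padd x y \<in> S - H" if "x \<in> S - H" "y \<in> H" for x y
      using that S padd_in_symp_kernel_iff[OF S w, of x y]
      by (auto simp: H_def S_def f2_subspace_def symp_kernel_def)
  qed
  finally show ?thesis .
qed

theorem lemma5p6:
  fixes n :: nat and psi phi :: "bool list \<Rightarrow> complex"
    and T :: "(bool list \<times> bool list) set"
  assumes "unit_state n psi"
    and "stabilizer_state n phi"
    and "(cmod (inner_n n phi psi))\<^sup>2 = stab_fidelity n psi"
    and "f2_subspace n T"
    and "T \<subset> weyl_set n phi"
  shows "(\<Sum>x\<in>weyl_set n phi - T. qdist n psi x)
           \<ge> (2 - sqrt 3) / 2 * stab_fidelity n psi ^ 4"
proof -
  note psi = assms(1) and st = assms(2) and max = assms(3)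
  have "f2_subspace n (weyl_set n phi)"
    using st f2_subspace_weyl_set by (simp add: stabilizer_state_iff)
  then obtain w x0 where w: "w \<in> pts n" "\<forall>t\<in>T. even (symp_form t w)"
    and x0: "x0 \<in> weyl_set n phi" "odd (symp_form x0 w)"
    using exists_symp_form_separating[OF assms(4) _ assms(5)] by blast
  define u where "u = (cmod (inner_n n phi psi))\<^sup>2"
  define v where "v = (cmod (inner_n n (weyl_apply w phi) psi))\<^sup>2"
  have "0 \<le> v" "v \<le> u"
    using stab_fidelity_ge[OF psi stabilizer_state_weyl_apply[OF st w(1)]] max
    by (simp_all add: u_def v_def)
  moreover have "2 * u * v \<le> (u - v)\<^sup>2"
    using cross_term_bound[OF psi st max w(1) x0] by (simp add: u_def v_def)
  ultimately have "(2 - sqrt 3) / 2 * u ^ 4 \<le> (u + v)\<^sup>2 / 2 * ((u - v)\<^sup>2 / 2)"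
    by (rule sqrt3_product_bound)
  also have "\<dots> \<le> (\<Sum>x\<in>weyl_set n phi - symp_kernel (weyl_set n phi) w. qdist n psi x)"
    using symp_kernel_complement_qdist_bound[OF st w(1) x0, of psi] by (simp add: u_def v_def)
  also have "\<dots> \<le> (\<Sum>x\<in>weyl_set n phi - T. qdist n psi x)"
    using assms(5) w(2) by (intro sum_mono2) (auto simp: symp_kernel_def qdist_nonneg)
  finally show ?thesis
    using max by (simp add: u_def)
qed

end
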